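(* Let $G$ be a finite group and $H\leqslant G$ a subgroup. If $g_2(H)\geq N$, then $g_2(G)\geq N$.
   Context: For a finite group $G$ and positive integer $N$, $r_N(G)$ is the minimum number of generators among subgroups of $G$ of index at most $N$, and $g_k(G)=\max\{N : |G|\geq N \text{ and } r_N(G)\geq k\}$. *)

theory Defs
  imports "HOL-Algebra.Algebra"
begin

definition gen_rank :: "('a, 'b) monoid_scheme \<Rightarrow> 'a set \<Rightarrow> nat" where
  "gen_rank G K = Inf {card S | S. S \<subseteq> K \<and> finite S \<and> generate G S = K}"

definition rN :: "('a, 'b) monoid_scheme \<Rightarrow> nat \<Rightarrow> nat" where
  "rN G N = Inf {gen_rank G K | K. subgroup K G \<and> card (rcosets\<^bsub>G\<^esub> K) \<le> N}"

text \<open>g_k(G) = max{N : 1 <= N <= |G|, r_N(G) >= k}; 0 if no such N.\<close>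
definition gk :: "('a, 'b) monoid_scheme \<Rightarrow> nat \<Rightarrow> nat" where
  "gk G k = Sup {N. 1 \<le> N \<and> N \<le> order G \<and> k \<le> rN G N}"

end

theory Submission
  imports Defs
begin

text \<open>
  A subgroup of index at most \<open>N\<close> of \<open>G\<close> is either non-cyclic or meets \<open>H\<close> in a cyclic
  subgroup of \<open>H\<close> whose index in \<open>H\<close> is again at most \<open>N\<close> (the cosets of \<open>K \<inter> H\<close> in \<open>H\<close> are
  traces of cosets of \<open>K\<close>). Hence \<open>r\<^sub>N(H) \<ge> 2\<close> forces \<open>r\<^sub>N(G) \<ge> 2\<close>, and since \<open>|H| \<le> |G|\<close>
  every \<open>N\<close> admissible for \<open>g\<^sub>2(H)\<close> is admissible for \<open>g\<^sub>2(G)\<close>.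
\<close>

lemma (in group) subgroup_nat_pow_closed:
  assumes "subgroup H G" "h \<in> H" shows "h [^] (k::nat) \<in> H"
  using subgroup_int_pow_closed[OF assms, of "int k"] assms by (simp add: int_pow_int)

lemma (in group) cyclic_subgroup_inter:
  assumes fin: "finite (carrier G)" and g: "g \<in> carrier G" and H: "subgroup H G"
  shows "\<exists>x\<in>H. generate G {g} \<inter> H = generate G {x}"
proof -
  have "g [^] ord g \<in> H" using pow_ord_eq_1[OF g] subgroup.one_closed[OF H] by simp
  moreover have "0 < ord g" using ord_ge_1[OF fin g] by simp
  ultimately have ex: "\<exists>d::nat. 0 < d \<and> g [^] d \<in> H" by blast
  \<comment> \<open>the least positive power of \<open>g\<close> lying in \<open>H\<close> generates the intersection\<close>
  define d where "d = (LEAST d::nat. 0 < d \<and> g [^] d \<in> H)"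
  have d: "0 < d" "g [^] d \<in> H" using LeastI_ex[OF ex] unfolding d_def by auto
  have d_min: "\<And>r::nat. 0 < r \<Longrightarrow> r < d \<Longrightarrow> g [^] r \<notin> H"
    using not_less_Least unfolding d_def by blast
  let ?x = "g [^] d"
  have x: "?x \<in> carrier G" using g by simp
  have "generate G {g} \<inter> H \<subseteq> generate G {?x}"
  proof
    fix y assume y: "y \<in> generate G {g} \<inter> H"
    then obtain n :: nat where n: "y = g [^] n"
      using generate_pow_on_finite_carrier[OF fin g] by blast
    define q r where "q = n div d" and "r = n mod d"
    have "n = d * q + r" unfolding q_def r_def by simp
    hence y_eq: "y = ?x [^] q \<otimes> g [^] r" using n g by (simp add: nat_pow_mult nat_pow_pow)
    hence "g [^] r = inv (?x [^] q) \<otimes> y"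
      using inv_solve_left[of "g [^] r" "?x [^] q" y] g n by simp
    moreover have "inv (?x [^] q) \<in> H"
      using subgroup_nat_pow_closed[OF H d(2)] subgroup.m_inv_closed[OF H] by blast
    ultimately have "g [^] r \<in> H" using y subgroup.m_closed[OF H] by auto
    moreover have "r < d" unfolding r_def using d(1) by simp
    ultimately have "r = 0" using d_min by blast
    hence "y = ?x [^] q" using y_eq x by simp
    thus "y \<in> generate G {?x}" using generate_pow_on_finite_carrier[OF fin x] by blast
  qed
  moreover have "generate G {?x} \<subseteq> generate G {g} \<inter> H"
  proof
    fix y assume "y \<in> generate G {?x}"
    then obtain k :: nat where k: "y = ?x [^] k"
      using generate_pow_on_finite_carrier[OF fin x] by blast
    have "y = g [^] (d * k)" using k g by (simp add: nat_pow_pow)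
    hence "y \<in> generate G {g}" using generate_pow_on_finite_carrier[OF fin g] by blast
    moreover have "y \<in> H" using k subgroup_nat_pow_closed[OF H d(2)] by simp
    ultimately show "y \<in> generate G {g} \<inter> H" by blast
  qed
  ultimately show ?thesis using d(2) by blast
qed

lemma (in group) r_coset_inter_subgroup:
  assumes K: "subgroup K G" and H: "subgroup H G" and h: "h \<in> H"
  shows "(K #> h) \<inter> H = (K \<inter> H) #> h"
proof -
  have hc: "h \<in> carrier G" using subgroup.mem_carrier[OF H h] .
  have "k \<in> H" if k: "k \<in> K" "k \<otimes> h \<in> H" for k
  proof -
    have "k = (k \<otimes> h) \<otimes> inv h" using subgroup.mem_carrier[OF K k(1)] hc by (simp add: m_assoc)
    also have "\<dots> \<in> H" using k(2) h subgroup.m_closed[OF H] subgroup.m_inv_closed[OF H] by blast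
    finally show ?thesis .
  qed
  thus ?thesis using h subgroup.m_closed[OF H] unfolding r_coset_def by blast
qed

lemma (in group) card_rcosets_inter_le:
  assumes K: "subgroup K G" and H: "subgroup H G" and fin: "finite (rcosets K)"
  shows "card (rcosets\<^bsub>G\<lparr>carrier := H\<rparr>\<^esub> (K \<inter> H)) \<le> card (rcosets K)"
proof -
  have "rcosets\<^bsub>G\<lparr>carrier := H\<rparr>\<^esub> (K \<inter> H) = (\<lambda>h. (K \<inter> H) #> h) ` H"
    unfolding RCOSETS_def r_coset_def by auto
  also have "\<dots> = (\<lambda>D. D \<inter> H) ` ((\<lambda>h. K #> h) ` H)"
    unfolding image_image using r_coset_inter_subgroup[OF K H] by (intro image_cong) auto
  finally have eq: "rcosets\<^bsub>G\<lparr>carrier := H\<rparr>\<^esub> (K \<inter> H) = (\<lambda>D. D \<inter> H) ` ((\<lambda>h. K #> h) ` H)" .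
  have sub: "(\<lambda>h. K #> h) ` H \<subseteq> rcosets K"
    using subgroup.subset[OF H] unfolding RCOSETS_def by auto
  have "card ((\<lambda>D. D \<inter> H) ` ((\<lambda>h. K #> h) ` H)) \<le> card ((\<lambda>h. K #> h) ` H)"
    using finite_subset[OF sub fin] by (rule card_image_le)
  also have "\<dots> \<le> card (rcosets K)" using card_mono[OF fin sub] .
  finally show ?thesis unfolding eq .
qed

lemma gen_rank_le_card:
  assumes "S \<subseteq> K" "finite S" "generate G S = K"
  shows "gen_rank G K \<le> card S"
  unfolding gen_rank_def using assms by (intro cInf_lower) auto

lemma (in group) gen_rank_le_1_imp_cyclic:
  assumes fin: "finite (carrier G)" and K: "subgroup K G" and r: "gen_rank G K \<le> 1"
  shows "\<exists>g\<in>carrier G. K = generate G {g}"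
proof -
  let ?T = "{card S | S. S \<subseteq> K \<and> finite S \<and> generate G S = K}"
  have Kc: "K \<subseteq> carrier G" using subgroup.subset[OF K] .
  have "generate G K = K" using generateI[OF K subset_refl] by simp
  hence "card K \<in> ?T" using finite_subset[OF Kc fin] by auto
  hence "gen_rank G K \<in> ?T" unfolding gen_rank_def by (intro Inf_nat_def1) blast
  then obtain S where S: "S \<subseteq> K" "finite S" "generate G S = K" "card S \<le> 1"
    using r by auto
  show ?thesis
  proof (cases "S = {}")
    case True
    hence "K = generate G {\<one>}" using S(3) generate_empty generate_one by simp
    thus ?thesis using one_closed by blast
  next
    case False
    hence "card S = 1" using S(2,4) by (simp add: le_Suc_eq)
    then obtain x where x: "S = {x}" by (rule card_1_singletonE)
    hence "x \<in> carrier G" using S(1) Kc by blast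
    thus ?thesis using S(3) x by blast
  qed
qed

lemma rN_le_gen_rank:
  assumes "subgroup K G" "card (rcosets\<^bsub>G\<^esub> K) \<le> M"
  shows "rN G M \<le> gen_rank G K"
  unfolding rN_def using assms by (intro cInf_lower) auto

lemma (in group) rN_attained:
  assumes fin: "finite (carrier G)" and M: "1 \<le> M"
  shows "\<exists>K. subgroup K G \<and> card (rcosets K) \<le> M \<and> rN G M = gen_rank G K"
proof -
  let ?R = "{gen_rank G K | K. subgroup K G \<and> card (rcosets K) \<le> M}"
  have "card (rcosets (carrier G)) = 1"
    using lagrange_finite[OF fin subgroup_self] fin one_closed
    by (auto simp: order_def card_gt_0_iff)
  hence "?R \<noteq> {}" using M subgroup_self by fastforce
  hence "rN G M \<in> ?R" unfolding rN_def by (rule Inf_nat_def1)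
  thus ?thesis by auto
qed

lemma (in group) two_le_rN_of_subgroup:
  assumes fin: "finite (carrier G)" and H: "subgroup H G" and M: "1 \<le> M"
    and rH: "2 \<le> rN (G\<lparr>carrier := H\<rparr>) M"
  shows "2 \<le> rN G M"
proof (rule ccontr)
  assume "\<not> 2 \<le> rN G M"
  then obtain K where K: "subgroup K G" "card (rcosets K) \<le> M" "gen_rank G K \<le> 1"
    using rN_attained[OF fin M] by fastforce
  obtain g where g: "g \<in> carrier G" "K = generate G {g}"
    using gen_rank_le_1_imp_cyclic[OF fin K(1,3)] by blast
  obtain x where x: "x \<in> H" "K \<inter> H = generate G {x}"
    using cyclic_subgroup_inter[OF fin g(1) H] g(2) by blast
  let ?H = "G\<lparr>carrier := H\<rparr>"
  have "generate ?H {x} = K \<inter> H" using generate_consistent[of "{x}" H] x H by simp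
  moreover have "x \<in> K \<inter> H" using x(2) generate.incl[of x "{x}" G] by simp
  ultimately have "gen_rank ?H (K \<inter> H) \<le> 1" using gen_rank_le_card[of "{x}" "K \<inter> H" ?H] by simp
  moreover have "subgroup (K \<inter> H) ?H"
    using subgroup_incl[OF subgroups_Inter_pair[OF K(1) H] H] by simp
  moreover have "card (rcosets\<^bsub>?H\<^esub> (K \<inter> H)) \<le> M"
    using card_rcosets_inter_le[OF K(1) H] K(2) rcosets_subset_PowG[OF K(1)] fin
    by (meson finite_Pow_iff le_trans rev_finite_subset)
  ultimately show False using rN_le_gen_rank[of "K \<inter> H" ?H M] rH by simp
qed

lemma le_gk_iff:
  assumes "0 < N"
  shows "N \<le> gk G k \<longleftrightarrow> (\<exists>M\<ge>N. M \<le> order G \<and> k \<le> rN G M)"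
proof -
  let ?A = "{M. 1 \<le> M \<and> M \<le> order G \<and> k \<le> rN G M}"
  have fin: "finite ?A" by (rule finite_subset[of _ "{..order G}"]) auto
  have "N \<le> Sup ?A \<longleftrightarrow> (\<exists>M\<in>?A. N \<le> M)"
  proof
    assume N: "N \<le> Sup ?A"
    have "?A \<noteq> {}"
    proof
      assume "?A = {}"
      hence "Sup ?A = 0" by (simp only: Sup_nat_empty)
      thus False using N assms by simp
    qed
    hence "Sup ?A = Max ?A" by (simp only: Sup_nat_def if_False)
    hence "Sup ?A \<in> ?A" using Max_in[OF fin \<open>?A \<noteq> {}\<close>] by (simp only:)
    thus "\<exists>M\<in>?A. N \<le> M" using N by blast
  next
    assume "\<exists>M\<in>?A. N \<le> M"
    then obtain M where "M \<in> ?A" "N \<le> M" by blast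
    thus "N \<le> Sup ?A" using le_cSup_finite[OF fin] order_trans by blast
  qed
  also have "\<dots> \<longleftrightarrow> (\<exists>M\<ge>N. M \<le> order G \<and> k \<le> rN G M)"
    using assms by (metis (no_types, lifting) Suc_leI dual_order.trans mem_Collect_eq One_nat_def)
  finally show ?thesis unfolding gk_def .
qed

theorem mainTheorem15:
  fixes G :: "('a, 'b) monoid_scheme" and H :: "'a set" and N :: nat
  assumes "group G" and "finite (carrier G)" and "subgroup H G"
    and "gk (G\<lparr>carrier := H\<rparr>) 2 \<ge> N"
  shows "gk G 2 \<ge> N"
proof (cases "N = 0")
  case False
  hence N: "0 < N" by simp
  obtain M where M: "N \<le> M" "M \<le> order (G\<lparr>carrier := H\<rparr>)" "2 \<le> rN (G\<lparr>carrier := H\<rparr>) M"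
    using assms(4) unfolding le_gk_iff[OF N] by blast
  have "order (G\<lparr>carrier := H\<rparr>) \<le> order G"
    using card_mono[OF assms(2) subgroup.subset[OF assms(3)]] by (simp add: order_def)
  moreover have "2 \<le> rN G M"
    using group.two_le_rN_of_subgroup[OF assms(1-3) _ M(3)] M(1) N by simp
  ultimately show ?thesis unfolding le_gk_iff[OF N] using M(1,2) by (blast intro: le_trans)
qed simp

end
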